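(* Let $X$ be a path-connected topological space, $Y\subset X$, $G$ a group, and $\mathcal{U}$ an open covering of $X$. Then the restriction map $Z^1(X,Y)\to Z^1_{\mathcal{U}}(X,Y)$ (restricting a cocycle from $P(X)$ to the set $P_{\mathcal{U}}(X)$ of short paths) is a bijection, and the induced map $H^1(X,Y)\to H^1_{\mathcal{U}}(X,Y)$ is a bijection.
   Context: Conventions: $I=[0,1]$; a path in $W$ is a continuous map $I\to W$; $P(W)$ is the set of all paths. For $p(1)=q(0)$, $p\cdot q$ is concatenation. Homotopies of paths are relative to $\{0,1\}$; $p\sim q$ means homotopic. $G$ has unit $1$. A $0$-cochain of $(X,Y)$ is a map $c\colon X\to G$ with $c|_Y=1$; they form a group $C^0(X,Y)$ under pointwise multiplication. A $1$-cochain is a map $u\colon P(X)\to G$ with $u(p)=1$ for paths $p$ with image in $Y$; a cocycle additionally satisfies $u(p)=u(q)$ if $p\sim q$ and $u(p\cdot q)=u(p)u(q)$ when $p\cdot q$ is defined; $Z^1(X,Y)$ is the set of cocycles; $C^0(X,Y)$ acts by $(c\bullet u)(p)=c(p(0))u(p)c(p(1))^{-1}$, and $H^1(X,Y)$ is the orbit set. Short versions: a path $p$ is short if $p(I)\subset U$ for some $U\in\mathcal{U}$; a homotopy $I\times[0,1]\to X$ is short if its image lies in some $U\in\mathcal{U}$. $P_{\mathcal{U}}(X)$ is the set of short paths. A short $1$-cochain is a map $u\colon P_{\mathcal{U}}(X)\to G$ with $u(p)=1$ for short paths $p$ with image in $Y$. It is a short cocycle if $u(p)=u(q)$ whenever there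 is a short homotopy relative to $\{0,1\}$ between $p$ and $q$, and $u(p\cdot q)=u(p)u(q)$ whenever $p\cdot q$ is defined and short. $Z^1_{\mathcal{U}}(X,Y)$ is the set of short cocycles; $C^0(X,Y)$ acts on it by the same formula, and $H^1_{\mathcal{U}}(X,Y)$ is the set of orbits. *)

theory Defs
  imports "HOL-Analysis.Analysis" "HOL-Algebra.Group"
begin

definition paths_of :: "'a topology \<Rightarrow> (real \<Rightarrow> 'a) set" where
  "paths_of X = {p. pathin X p}"

text \<open>Concatenation of paths (same formula as the library's joinpaths, without type class).\<close>
definition pjoin :: "(real \<Rightarrow> 'a) \<Rightarrow> (real \<Rightarrow> 'a) \<Rightarrow> real \<Rightarrow> 'a" where
  "pjoin p q = (\<lambda>t. if t \<le> 1/2 then p (2 * t) else q (2 * t - 1))"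

definition phomotopic :: "'a topology \<Rightarrow> (real \<Rightarrow> 'a) \<Rightarrow> (real \<Rightarrow> 'a) \<Rightarrow> bool" where
  "phomotopic X p q =
     homotopic_with (\<lambda>r. r 0 = p 0 \<and> r 1 = p 1) (top_of_set {0..1}) X p q"

definition short_paths :: "'a topology \<Rightarrow> 'a set set \<Rightarrow> (real \<Rightarrow> 'a) set" where
  "short_paths X \<U> = {p. pathin X p \<and> (\<exists>U\<in>\<U>. p ` {0..1} \<subseteq> U)}"

definition short_homotopic :: "'a topology \<Rightarrow> 'a set set \<Rightarrow> (real \<Rightarrow> 'a) \<Rightarrow> (real \<Rightarrow> 'a) \<Rightarrow> bool" where
  "short_homotopic X \<U> p q =
     (\<exists>U\<in>\<U>. homotopic_with (\<lambda>r. r 0 = p 0 \<and> r 1 = p 1) (top_of_set {0..1}) (subtopology X U) p q)"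

definition cochains0 :: "'a topology \<Rightarrow> 'a set \<Rightarrow> ('g, 'b) monoid_scheme \<Rightarrow> ('a \<Rightarrow> 'g) set" where
  "cochains0 X Y G = {c. c \<in> extensional (topspace X) \<and> (\<forall>x\<in>topspace X. c x \<in> carrier G)
                         \<and> (\<forall>y\<in>Y. c y = \<one>\<^bsub>G\<^esub>)}"

definition cocycles1 :: "'a topology \<Rightarrow> 'a set \<Rightarrow> ('g, 'b) monoid_scheme \<Rightarrow> ((real \<Rightarrow> 'a) \<Rightarrow> 'g) set" where
  "cocycles1 X Y G = {u. u \<in> extensional (paths_of X)
      \<and> (\<forall>p\<in>paths_of X. u p \<in> carrier G)
      \<and> (\<forall>p\<in>paths_of X. p ` {0..1} \<subseteq> Y \<longrightarrow> u p = \<one>\<^bsub>G\<^esub>)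
      \<and> (\<forall>p\<in>paths_of X. \<forall>q\<in>paths_of X. phomotopic X p q \<longrightarrow> u p = u q)
      \<and> (\<forall>p\<in>paths_of X. \<forall>q\<in>paths_of X. p 1 = q 0 \<longrightarrow> u (pjoin p q) = u p \<otimes>\<^bsub>G\<^esub> u q)}"

definition short_cocycles1 :: "'a topology \<Rightarrow> 'a set set \<Rightarrow> 'a set \<Rightarrow> ('g, 'b) monoid_scheme \<Rightarrow> ((real \<Rightarrow> 'a) \<Rightarrow> 'g) set" where
  "short_cocycles1 X \<U> Y G = {u. u \<in> extensional (short_paths X \<U>)
      \<and> (\<forall>p\<in>short_paths X \<U>. u p \<in> carrier G)
      \<and> (\<forall>p\<in>short_paths X \<U>. p ` {0..1} \<subseteq> Y \<longrightarrow> u p = \<one>\<^bsub>G\<^esub>)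
      \<and> (\<forall>p\<in>short_paths X \<U>. \<forall>q\<in>short_paths X \<U>. short_homotopic X \<U> p q \<longrightarrow> u p = u q)
      \<and> (\<forall>p\<in>short_paths X \<U>. \<forall>q\<in>short_paths X \<U>. p 1 = q 0 \<longrightarrow> pjoin p q \<in> short_paths X \<U>
            \<longrightarrow> u (pjoin p q) = u p \<otimes>\<^bsub>G\<^esub> u q)}"

definition cochain_act :: "('g, 'b) monoid_scheme \<Rightarrow> (real \<Rightarrow> 'a) set \<Rightarrow> ('a \<Rightarrow> 'g) \<Rightarrow> ((real \<Rightarrow> 'a) \<Rightarrow> 'g)
     \<Rightarrow> ((real \<Rightarrow> 'a) \<Rightarrow> 'g)" where
  "cochain_act G P c u = (\<lambda>p\<in>P. c (p 0) \<otimes>\<^bsub>G\<^esub> u p \<otimes>\<^bsub>G\<^esub> inv\<^bsub>G\<^esub> (c (p 1)))"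

definition H1 :: "'a topology \<Rightarrow> 'a set \<Rightarrow> ('g, 'b) monoid_scheme \<Rightarrow> ((real \<Rightarrow> 'a) \<Rightarrow> 'g) set set" where
  "H1 X Y G = {{cochain_act G (paths_of X) c u | c. c \<in> cochains0 X Y G} | u. u \<in> cocycles1 X Y G}"

definition short_H1 :: "'a topology \<Rightarrow> 'a set set \<Rightarrow> 'a set \<Rightarrow> ('g, 'b) monoid_scheme \<Rightarrow> ((real \<Rightarrow> 'a) \<Rightarrow> 'g) set set" where
  "short_H1 X \<U> Y G = {{cochain_act G (short_paths X \<U>) c u | c. c \<in> cochains0 X Y G} | u. u \<in> short_cocycles1 X \<U> Y G}"

definition restrict_short :: "'a topology \<Rightarrow> 'a set set \<Rightarrow> ((real \<Rightarrow> 'a) \<Rightarrow> 'g) \<Rightarrow> ((real \<Rightarrow> 'a) \<Rightarrow> 'g)" where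
  "restrict_short X \<U> u = restrict u (short_paths X \<U>)"

end

theory Submission
  imports Defs
begin

(* A short cocycle w is extended to all paths by lifting: a lift of a path p is a map
   F : [0,1] -> G with F 0 = 1 and F b = F a * w(p|[a,b]) whenever p maps [a,b] into a member
   of the cover, and the extension takes the value F 1 on p.  Straight-line homotopies inside a
   chart make w additive on subdivisions of short paths; together with a Lebesgue number of the
   cover along p this gives existence and uniqueness of lifts.  For homotopy invariance, a
   Lebesgue number cuts the homotopy square into vertical strips so thin that on each strip the
   lift along the right edge is the lift along the left edge times the value of w on the
   horizontal segment at the same height; at the top that segment is constant.
   Every cocycle restricting to w satisfies the lift equation, so restriction is bijective on
   cocycles; it commutes with the action of 0-cochains, hence is bijective on orbits as well. *)

lemma real_interval_step_induct:
  fixes a b \<delta> t :: real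
  assumes "\<delta> > 0" and "P a"
    and step: "\<And>x y. a \<le> x \<Longrightarrow> x \<le> y \<Longrightarrow> y \<le> b \<Longrightarrow> y - x < \<delta> \<Longrightarrow> P x \<Longrightarrow> P y"
    and "a \<le> t" "t \<le> b"
  shows "P t"
proof -
  have "\<forall>t. a \<le> t \<longrightarrow> t \<le> b \<longrightarrow> t \<le> a + real n * (\<delta>/2) \<longrightarrow> P t" for n
  proof (induction n)
    case 0
    then show ?case using \<open>P a\<close> by auto
  next
    case (Suc n)
    show ?case
    proof (intro allI impI)
      fix t assume t: "a \<le> t" "t \<le> b" "t \<le> a + real (Suc n) * (\<delta>/2)"
      define x where "x = min t (a + real n * (\<delta>/2))"
      have x: "a \<le> x" "x \<le> t" "t - x < \<delta>"
        using t \<open>\<delta> > 0\<close> unfolding x_def min_def by (auto simp: field_simps)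
      then have "P x" using Suc.IH t by (auto simp: x_def)
      then show "P t" using step x t by blast
    qed
  qed
  moreover have "\<delta>/2 > 0" using \<open>\<delta> > 0\<close> by simp
  then obtain n where "b - a < real n * (\<delta>/2)" using reals_Archimedean3 by blast
  moreover have "t \<le> a + real n * (\<delta>/2)" using \<open>b - a < real n * (\<delta>/2)\<close> assms(5) by linarith
  ultimately show ?thesis using assms(4,5) by blast
qed

lemma Lebesgue_number_open_cover:
  fixes S :: "'v::metric_space set"
  assumes "compact S" "S \<noteq> {}" and f: "continuous_map (top_of_set S) X f"
    and opn: "\<And>U. U \<in> \<U> \<Longrightarrow> openin X U" and cov: "topspace X \<subseteq> \<Union>\<U>"
  obtains \<delta> where "\<delta> > 0" "\<And>T. T \<subseteq> S \<Longrightarrow> diameter T < \<delta> \<Longrightarrow> \<exists>U\<in>\<U>. f ` T \<subseteq> U"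
proof -
  define \<C> where "\<C> = {V. open V \<and> (\<exists>U\<in>\<U>. S \<inter> V \<subseteq> f -` U)}"
  have S_cover: "S \<subseteq> \<Union>\<C>"
  proof
    fix x assume x: "x \<in> S"
    then have "f x \<in> topspace X" using continuous_map_image_subset_topspace[OF f] by fastforce
    then obtain U where U: "U \<in> \<U>" "f x \<in> U" using cov by auto
    have "openin (top_of_set S) {y \<in> topspace (top_of_set S). f y \<in> U}"
      using openin_continuous_map_preimage[OF f opn[OF U(1)]] .
    then obtain V where V: "open V" "{y \<in> S. f y \<in> U} = S \<inter> V" by (auto simp: openin_open)
    then have "V \<in> \<C>" "x \<in> V" using x U unfolding \<C>_def by blast+
    then show "x \<in> \<Union>\<C>" by blast
  qed
  have nonempty: "\<C> \<noteq> {}" using S_cover \<open>S \<noteq> {}\<close> by blast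
  have opens: "\<And>V. V \<in> \<C> \<Longrightarrow> open V" by (simp add: \<C>_def)
  show thesis
  proof (rule Lebesgue_number_lemma[OF \<open>compact S\<close> nonempty S_cover opens])
    fix \<delta> :: real assume "0 < \<delta>" and \<delta>: "\<And>T. T \<subseteq> S \<Longrightarrow> diameter T < \<delta> \<Longrightarrow> \<exists>V\<in>\<C>. T \<subseteq> V"
    show thesis
    proof (rule that[OF \<open>0 < \<delta>\<close>])
      fix T assume T: "T \<subseteq> S" "diameter T < \<delta>"
      then obtain V where "V \<in> \<C>" "T \<subseteq> V" using \<delta> by blast
      then obtain U where "U \<in> \<U>" "S \<inter> V \<subseteq> f -` U" unfolding \<C>_def by blast
      then show "\<exists>U\<in>\<U>. f ` T \<subseteq> U" using T \<open>T \<subseteq> V\<close> by blast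
    qed
  qed
qed

lemma diameter_real_rectangle_le:
  fixes s s' a b :: real
  assumes "s \<le> s'" "a \<le> b"
  shows "diameter ({s..s'} \<times> {a..b}) \<le> (s' - s) + (b - a)"
proof (rule diameter_le)
  fix x y assume "x \<in> {s..s'} \<times> {a..b}" "y \<in> {s..s'} \<times> {a..b}"
  moreover have "x - y = (fst x - fst y, snd x - snd y)" by (simp add: prod_eq_iff)
  then have "norm (x - y) \<le> norm (fst x - fst y) + norm (snd x - snd y)"
    using norm_Pair_le[of "fst x - fst y" "snd x - snd y"] by simp
  ultimately show "norm (x - y) \<le> (s' - s) + (b - a)" by auto
qed (use assms in auto)

lemma linepath_real: "linepath a b = (\<lambda>t. (b - a) * t + (a::real))"
  by (auto simp: linepath_def algebra_simps)

lemma linepath_Pair: "linepath (a, b) (c, d) = (\<lambda>t. (linepath a c t, linepath b d t))"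
  by (simp add: linepath_def fun_eq_iff)

lemma linepath_compose_linepath:
  fixes a b x y :: real
  shows "linepath a b \<circ> linepath x y = linepath (linepath a b x) (linepath a b y)"
  by (simp add: linepath_real fun_eq_iff algebra_simps)

lemma linepath_real_image:
  fixes a b x y :: real
  assumes "a \<le> b" "x \<le> y"
  shows "linepath a b ` {x..y} = {linepath a b x..linepath a b y}"
  using assms by (simp add: linepath_real image_affinity_atLeastAtMost)

lemma pathin_compose_path:
  assumes "continuous_map (top_of_set T) X h" "path \<gamma>" "path_image \<gamma> \<subseteq> T"
  shows "pathin X (h \<circ> \<gamma>)"
  using assms by (intro pathin_compose[of "top_of_set T"]) (auto simp: pathin_canon_iff path_image_def)

lemma pathin_slice:
  assumes "continuous_map (top_of_set (S \<times> {0..1})) X h" "r \<in> S"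
  shows "pathin X (\<lambda>t. h (r, t))"
proof -
  have "path (\<lambda>t. (r, t))" "path_image (\<lambda>t. (r, t)) \<subseteq> S \<times> {0..1}"
    using assms(2) by (auto simp: path_def path_image_def intro!: continuous_intros)
  then show ?thesis using pathin_compose_path[OF assms(1)] by (simp add: o_def)
qed

lemma pathin_compose_linepath:
  assumes "pathin X p" "a \<in> {0..1}" "b \<in> {0..1}"
  shows "pathin X (p \<circ> linepath a b)"
  using assms closed_segment_subset[of a "{0..1}" b]
  by (intro pathin_compose_path) (auto simp: pathin_def)

lemma image_compose_linepath:
  fixes a b :: real
  assumes "a \<le> b"
  shows "(p \<circ> linepath a b) ` {0..1} = p ` {a..b}"
proof -
  have "linepath a b ` {0..1} = {a..b}"
    using assms by (simp add: linepath_image_01 closed_segment_eq_real_ivl)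
  then show ?thesis unfolding image_comp[symmetric] by simp
qed

lemma pjoin_compose: "pjoin (h \<circ> g1) (h \<circ> g2) = h \<circ> (g1 +++ g2)"
  by (auto simp: pjoin_def joinpaths_def fun_eq_iff)

lemma pjoin_0 [simp]: "pjoin p q 0 = p 0" and pjoin_1 [simp]: "pjoin p q 1 = q 1"
  by (auto simp: pjoin_def)

lemma pathin_pjoin:
  assumes "pathin X g1" "pathin X g2" "g1 1 = g2 0"
  shows "pathin X (pjoin g1 g2)"
proof -
  let ?T01 = "top_of_set {0..1::real}"
  have g1: "continuous_map ?T01 X g1" and g2: "continuous_map ?T01 X g2"
    using assms unfolding pathin_def by auto
  let ?g = "\<lambda>x. if x \<le> 1/2 then (g1 \<circ> (\<lambda>t. 2 * t)) x else (g2 \<circ> (\<lambda>t. 2 * t -1)) x"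
  have "continuous_map (subtopology euclideanreal {0..1}) X ?g"
  proof (intro continuous_map_cases_le continuous_map_compose, force, force)
    show "continuous_map (subtopology ?T01 {x \<in> topspace ?T01. x \<le> 1/2}) ?T01 ((*) 2)"
      by (auto simp: continuous_map_in_subtopology continuous_map_from_subtopology)
    have "continuous_map
           (subtopology (top_of_set {0..1}) {x. 0 \<le> x \<and> x \<le> 1 \<and> 1 \<le> x * 2})
           euclideanreal (\<lambda>t. 2 * t - 1)"
      by (intro continuous_intros) (force intro: continuous_map_from_subtopology)
    then show "continuous_map (subtopology ?T01 {x \<in> topspace ?T01. 1/2 \<le> x}) ?T01 (\<lambda>t. 2 * t - 1)"
      by (force simp: continuous_map_in_subtopology)
  qed (use assms(3) in \<open>auto simp: g1 g2 mult.commute\<close>)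
  moreover have "?g = pjoin g1 g2" by (auto simp: pjoin_def fun_eq_iff)
  ultimately show ?thesis unfolding pathin_def by simp
qed

locale short_cocycle =
  fixes X :: "'a topology" and \<U> :: "'a set set" and Y :: "'a set"
    and G :: "('g, 'b) monoid_scheme" and w :: "(real \<Rightarrow> 'a) \<Rightarrow> 'g"
  assumes openin_cover: "\<And>U. U \<in> \<U> \<Longrightarrow> openin X U"
    and Union_cover: "\<Union>\<U> = topspace X"
    and group_G: "group G"
    and w_short_cocycle: "w \<in> short_cocycles1 X \<U> Y G"
begin

sublocale G: group G by (rule group_G)

lemma w_extensional: "w \<in> extensional (short_paths X \<U>)"
  and w_carrier: "p \<in> short_paths X \<U> \<Longrightarrow> w p \<in> carrier G"
  and w_trivial_on_Y: "p \<in> short_paths X \<U> \<Longrightarrow> p ` {0..1} \<subseteq> Y \<Longrightarrow> w p = \<one>\<^bsub>G\<^esub>"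
  and w_short_homotopic:
    "p \<in> short_paths X \<U> \<Longrightarrow> q \<in> short_paths X \<U> \<Longrightarrow> short_homotopic X \<U> p q \<Longrightarrow> w p = w q"
  and w_pjoin: "p \<in> short_paths X \<U> \<Longrightarrow> q \<in> short_paths X \<U> \<Longrightarrow> p 1 = q 0 \<Longrightarrow>
    pjoin p q \<in> short_paths X \<U> \<Longrightarrow> w (pjoin p q) = w p \<otimes>\<^bsub>G\<^esub> w q"
  using w_short_cocycle unfolding short_cocycles1_def by auto

lemma short_pathsI: "pathin X p \<Longrightarrow> U \<in> \<U> \<Longrightarrow> p ` {0..1} \<subseteq> U \<Longrightarrow> p \<in> short_paths X \<U>"
  by (auto simp: short_paths_def)

lemma const_short_path: "x \<in> topspace X \<Longrightarrow> (\<lambda>t. x) \<in> short_paths X \<U>"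
  using Union_cover by (auto simp: short_paths_def)

lemma w_const:
  assumes "x \<in> topspace X"
  shows "w (\<lambda>t. x) = \<one>\<^bsub>G\<^esub>"
proof -
  have short: "(\<lambda>t. x) \<in> short_paths X \<U>" by (rule const_short_path[OF assms])
  have "pjoin (\<lambda>t. x) (\<lambda>t. x) = (\<lambda>t. x)" by (simp add: pjoin_def)
  then have "w (\<lambda>t. x) = w (\<lambda>t. x) \<otimes>\<^bsub>G\<^esub> w (\<lambda>t. x)"
    using w_pjoin[OF short short] short by simp
  then show ?thesis using w_carrier[OF short] by simp
qed

lemma w_cong:
  assumes "p \<in> short_paths X \<U>" "q \<in> short_paths X \<U>" "\<And>t. t \<in> {0..1} \<Longrightarrow> p t = q t"
  shows "w p = w q"
proof (rule w_short_homotopic[OF assms(1,2)])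
  obtain U where U: "U \<in> \<U>" "p ` {0..1} \<subseteq> U" "pathin X p"
    using assms(1) by (auto simp: short_paths_def)
  then have "homotopic_with (\<lambda>r. r 0 = p 0 \<and> r 1 = p 1) (top_of_set {0..1}) (subtopology X U) p q"
    using assms(3) by (intro homotopic_with_equal) (auto simp: pathin_def continuous_map_in_subtopology)
  then show "short_homotopic X \<U> p q" using U(1) by (auto simp: short_homotopic_def)
qed

lemma w_eq_one_if_constant:
  assumes "p \<in> short_paths X \<U>" "\<And>t. t \<in> {0..1} \<Longrightarrow> p t = x"
  shows "w p = \<one>\<^bsub>G\<^esub>"
proof -
  have "x \<in> topspace X"
    using assms path_start_in_topspace[of X p] by (auto simp: short_paths_def)
  then show ?thesis
    using w_cong[OF assms(1) const_short_path] w_const assms(2) by simp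
qed

lemma short_path_in_chart:
  assumes "continuous_map (top_of_set T) X h" "h ` T \<subseteq> U" "U \<in> \<U>"
    and "path \<gamma>" "path_image \<gamma> \<subseteq> T"
  shows "h \<circ> \<gamma> \<in> short_paths X \<U>"
  using assms pathin_compose_path[OF assms(1,4,5)] by (intro short_pathsI) (auto simp: path_image_def)

lemma w_chart_triangle:
  fixes a b c :: "'v::real_normed_vector"
  assumes "convex T" and h: "continuous_map (top_of_set T) X h" and U: "h ` T \<subseteq> U" "U \<in> \<U>"
    and abc: "a \<in> T" "b \<in> T" "c \<in> T"
  shows "w (h \<circ> linepath a c) = w (h \<circ> linepath a b) \<otimes>\<^bsub>G\<^esub> w (h \<circ> linepath b c)"
proof -
  have seg: "path_image (linepath x y) \<subseteq> T" if "x \<in> T" "y \<in> T" for x y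
    using closed_segment_subset[OF that \<open>convex T\<close>] by simp
  let ?\<gamma> = "linepath a b +++ linepath b c"
  have \<gamma>: "path ?\<gamma>" "path_image ?\<gamma> \<subseteq> T"
    using seg[OF abc(1,2)] seg[OF abc(2,3)] path_image_join_subset[of "linepath a b" "linepath b c"]
    by auto
  have short: "h \<circ> \<gamma> \<in> short_paths X \<U>" if "path \<gamma>" "path_image \<gamma> \<subseteq> T" for \<gamma>
    using short_path_in_chart[OF h U] that .
  have short_line: "h \<circ> linepath x y \<in> short_paths X \<U>" if "x \<in> T" "y \<in> T" for x y
    using short[OF path_linepath seg[OF that]] .
  have "homotopic_paths T (linepath a c) ?\<gamma>"
  proof (rule homotopic_paths_linear)
    fix t :: real assume "t \<in> {0..1}"
    then have "linepath a c t \<in> T" "?\<gamma> t \<in> T"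
      using seg[OF abc(1,3)] \<gamma>(2) by (auto simp: path_image_def)
    then show "closed_segment (linepath a c t) (?\<gamma> t) \<subseteq> T"
      using closed_segment_subset \<open>convex T\<close> by blast
  qed (use \<gamma> in auto)
  moreover have "continuous_map (top_of_set T) (subtopology X U) h"
    using h U(1) by (simp add: continuous_map_in_subtopology image_subset_iff Pi_iff)
  ultimately have "homotopic_with (\<lambda>r. r 0 = (h \<circ> linepath a c) 0 \<and> r 1 = (h \<circ> linepath a c) 1)
      (top_of_set {0..1}) (subtopology X U) (h \<circ> linepath a c) (h \<circ> ?\<gamma>)"
    unfolding homotopic_paths_def
    by (rule homotopic_with_compose_continuous_map_left) (simp add: pathstart_def pathfinish_def)
  then have "short_homotopic X \<U> (h \<circ> linepath a c) (h \<circ> ?\<gamma>)"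
    unfolding short_homotopic_def using U(2) by (rule bexI)
  then have "w (h \<circ> linepath a c) = w (h \<circ> ?\<gamma>)"
    by (rule w_short_homotopic[OF short_line[OF abc(1,3)] short[OF \<gamma>]])
  also have "\<dots> = w (pjoin (h \<circ> linepath a b) (h \<circ> linepath b c))"
    by (simp add: pjoin_compose)
  also have "\<dots> = w (h \<circ> linepath a b) \<otimes>\<^bsub>G\<^esub> w (h \<circ> linepath b c)"
  proof (rule w_pjoin[OF short_line[OF abc(1,2)] short_line[OF abc(2,3)]])
    show "(h \<circ> linepath a b) 1 = (h \<circ> linepath b c) 0" by (simp add: linepath_0' linepath_1')
    show "pjoin (h \<circ> linepath a b) (h \<circ> linepath b c) \<in> short_paths X \<U>"
      using short[OF \<gamma>] by (simp add: pjoin_compose)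
  qed
  finally show ?thesis .
qed

lemma w_subpath_split:
  assumes "pathin X p" "0 \<le> a" "a \<le> b" "b \<le> c" "c \<le> 1" "U \<in> \<U>" "p ` {a..c} \<subseteq> U"
  shows "w (p \<circ> linepath a c) = w (p \<circ> linepath a b) \<otimes>\<^bsub>G\<^esub> w (p \<circ> linepath b c)"
proof (rule w_chart_triangle[of "{a..c}" p U a b c])
  have "continuous_map (top_of_set {0..1}) X p" using assms(1) by (simp add: pathin_def)
  then show "continuous_map (top_of_set {a..c}) X p"
    by (rule continuous_map_from_subtopology_mono) (use assms in auto)
qed (use assms in auto)

lemma w_rectangle:
  fixes h :: "real \<times> real \<Rightarrow> 'a"
  assumes h: "continuous_map (top_of_set ({s..s'} \<times> {a..b})) X h" and "s \<le> s'" "a \<le> b"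
    and U: "U \<in> \<U>" "h ` ({s..s'} \<times> {a..b}) \<subseteq> U"
  shows "w ((\<lambda>t. h (s, t)) \<circ> linepath a b) \<otimes>\<^bsub>G\<^esub> w (h \<circ> linepath (s, b) (s', b))
       = w (h \<circ> linepath (s, a) (s', a)) \<otimes>\<^bsub>G\<^esub> w ((\<lambda>t. h (s', t)) \<circ> linepath a b)"
proof -
  have vertical: "(\<lambda>t. h (r, t)) \<circ> linepath a b = h \<circ> linepath (r, a) (r, b)" for r
    by (simp add: linepath_Pair linepath_refl o_def)
  have "convex ({s..s'} \<times> {a..b})" by (intro convex_Times convex_real_interval)
  note triangle = w_chart_triangle[OF this h U(2,1)]
  have corners: "(s, a) \<in> {s..s'} \<times> {a..b}" "(s, b) \<in> {s..s'} \<times> {a..b}"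
    "(s', a) \<in> {s..s'} \<times> {a..b}" "(s', b) \<in> {s..s'} \<times> {a..b}"
    using assms by auto
  show ?thesis
    unfolding vertical
    using triangle[OF corners(1,2,4)] triangle[OF corners(1,3,4)] by (rule trans[OF sym])
qed

lemma short_subpath:
  assumes "pathin X p" "0 \<le> a" "a \<le> b" "b \<le> 1" "U \<in> \<U>" "p ` {a..b} \<subseteq> U"
  shows "p \<circ> linepath a b \<in> short_paths X \<U>"
  using assms pathin_compose_linepath[of X p a b] image_compose_linepath[of a b p]
  by (intro short_pathsI) auto

lemma path_Lebesgue_number:
  assumes "pathin X p"
  obtains \<delta> where "\<delta> > 0"
    "\<And>a b. 0 \<le> a \<Longrightarrow> a \<le> b \<Longrightarrow> b \<le> 1 \<Longrightarrow> b - a < \<delta> \<Longrightarrow> \<exists>U\<in>\<U>. p ` {a..b} \<subseteq> U"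
proof (rule Lebesgue_number_open_cover[of "{0..1::real}" X p \<U>])
  show "continuous_map (top_of_set {0..1}) X p" using assms by (simp add: pathin_def)
  fix \<delta> :: real
  assume "\<delta> > 0" and \<delta>: "\<And>T. T \<subseteq> {0..1} \<Longrightarrow> diameter T < \<delta> \<Longrightarrow> \<exists>U\<in>\<U>. p ` T \<subseteq> U"
  show thesis
  proof (rule that[OF \<open>\<delta> > 0\<close>])
    fix a b :: real assume "0 \<le> a" "a \<le> b" "b \<le> 1" "b - a < \<delta>"
    then show "\<exists>U\<in>\<U>. p ` {a..b} \<subseteq> U" by (intro \<delta>) auto
  qed
qed (use openin_cover Union_cover in auto)

text \<open>\<^term>\<open>p \<circ> linepath a b\<close> is \<open>p\<close> restricted to \<open>[a, b]\<close> and reparametrized by \<open>[0, 1]\<close>;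
  \<open>F t\<close> is the value on \<open>p\<close> restricted to \<open>[0, t]\<close> of the extension of \<open>w\<close> under construction.\<close>

definition lift_upto :: "real \<Rightarrow> (real \<Rightarrow> 'a) \<Rightarrow> (real \<Rightarrow> 'g) \<Rightarrow> bool" where
  "lift_upto c p F \<longleftrightarrow> F 0 = \<one>\<^bsub>G\<^esub> \<and> (\<forall>t\<in>{0..c}. F t \<in> carrier G) \<and>
     (\<forall>a b U. 0 \<le> a \<longrightarrow> a \<le> b \<longrightarrow> b \<le> c \<longrightarrow> U \<in> \<U> \<longrightarrow> p ` {a..b} \<subseteq> U \<longrightarrow>
        F b = F a \<otimes>\<^bsub>G\<^esub> w (p \<circ> linepath a b))"

lemma lift_uptoD:
  assumes "lift_upto c p F"
  shows "F 0 = \<one>\<^bsub>G\<^esub>" and "t \<in> {0..c} \<Longrightarrow> F t \<in> carrier G"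
    and "0 \<le> a \<Longrightarrow> a \<le> b \<Longrightarrow> b \<le> c \<Longrightarrow> U \<in> \<U> \<Longrightarrow> p ` {a..b} \<subseteq> U \<Longrightarrow>
      F b = F a \<otimes>\<^bsub>G\<^esub> w (p \<circ> linepath a b)"
  using assms unfolding lift_upto_def by blast+

lemma lift_upto_extend:
  assumes p: "pathin X p" and F: "lift_upto c p F" and c: "0 \<le> c" "c \<le> c'" "c' \<le> 1"
    and U: "U \<in> \<U>" "p ` {c..c'} \<subseteq> U"
  shows "lift_upto c' p (\<lambda>t. if t \<le> c then F t else F c \<otimes>\<^bsub>G\<^esub> w (p \<circ> linepath c t))"
    (is "lift_upto c' p ?F")
proof -
  have in_U: "p ` {a..b} \<subseteq> U" if "c \<le> a" "b \<le> c'" for a b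
    using that by (intro subset_trans[OF image_mono U(2)]) auto
  have wc: "w (p \<circ> linepath a b) \<in> carrier G" if "c \<le> a" "a \<le> b" "b \<le> c'" for a b
    using that c in_U by (intro w_carrier short_subpath[OF p _ _ _ U(1)]) auto
  show ?thesis
    unfolding lift_upto_def
  proof (intro conjI ballI allI impI)
    show "?F 0 = \<one>\<^bsub>G\<^esub>" using lift_uptoD(1)[OF F] c by simp
    show "?F t \<in> carrier G" if "t \<in> {0..c'}" for t
      using that lift_uptoD(2)[OF F] wc[of c t] c by auto
    fix a b V assume ab: "0 \<le> a" "a \<le> b" "b \<le> c'" and V: "V \<in> \<U>" "p ` {a..b} \<subseteq> V"
    consider "b \<le> c" | "c < a" | "a \<le> c" "c < b" by linarith
    then show "?F b = ?F a \<otimes>\<^bsub>G\<^esub> w (p \<circ> linepath a b)"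
    proof cases
      case 1
      then show ?thesis using lift_uptoD(3)[OF F ab(1,2) 1 V] ab by simp
    next
      case 2
      have "w (p \<circ> linepath c b) = w (p \<circ> linepath c a) \<otimes>\<^bsub>G\<^esub> w (p \<circ> linepath a b)"
        using 2 ab c in_U by (intro w_subpath_split[OF p _ _ _ _ U(1)]) auto
      then show ?thesis
        using 2 ab c lift_uptoD(2)[OF F, of c] wc[of c a] wc[of a b] by (simp add: G.m_assoc)
    next
      case 3
      have "p ` {a..c} \<subseteq> V" using 3 by (intro subset_trans[OF image_mono V(2)]) auto
      then have "F c = F a \<otimes>\<^bsub>G\<^esub> w (p \<circ> linepath a c)"
        and "w (p \<circ> linepath a c) \<in> carrier G"
        using lift_uptoD(3)[OF F ab(1) 3(1) order_refl V(1)] short_subpath[OF p ab(1) 3(1) _ V(1)] c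
        by (auto intro: w_carrier)
      moreover have "w (p \<circ> linepath a b) = w (p \<circ> linepath a c) \<otimes>\<^bsub>G\<^esub> w (p \<circ> linepath c b)"
        using 3 ab c V(2) by (intro w_subpath_split[OF p _ _ _ _ V(1)]) auto
      ultimately show ?thesis
        using 3 ab c lift_uptoD(2)[OF F, of a] wc[of c b] by (simp add: G.m_assoc)
    qed
  qed
qed

lemma lift_exists:
  assumes p: "pathin X p"
  shows "\<exists>F. lift_upto 1 p F"
proof -
  obtain \<delta> where "\<delta> > 0"
    and \<delta>: "\<And>a b. 0 \<le> a \<Longrightarrow> a \<le> b \<Longrightarrow> b \<le> 1 \<Longrightarrow> b - a < \<delta> \<Longrightarrow> \<exists>U\<in>\<U>. p ` {a..b} \<subseteq> U"
    using path_Lebesgue_number[OF p] by blast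
  show ?thesis
  proof (rule real_interval_step_induct[where P = "\<lambda>c. \<exists>F. lift_upto c p F", OF \<open>\<delta> > 0\<close>])
    have "lift_upto 0 p (\<lambda>_. \<one>\<^bsub>G\<^esub>)"
      unfolding lift_upto_def
    proof (intro conjI ballI allI impI)
      fix a b :: real and U assume "0 \<le> a" "a \<le> b" "b \<le> 0" "U \<in> \<U>" "p ` {a..b} \<subseteq> U"
      then have "a = 0" "b = 0" by auto
      then show "\<one>\<^bsub>G\<^esub> = \<one>\<^bsub>G\<^esub> \<otimes>\<^bsub>G\<^esub> w (p \<circ> linepath a b)"
        using w_const[OF path_start_in_topspace[OF p]] by (simp add: linepath_refl o_def)
    qed auto
    then show "\<exists>F. lift_upto 0 p F" by blast
  next
    fix x y assume xy: "0 \<le> x" "x \<le> y" "y \<le> 1" "y - x < \<delta>" and "\<exists>F. lift_upto x p F"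
    then obtain F where "lift_upto x p F" by blast
    moreover obtain U where "U \<in> \<U>" "p ` {x..y} \<subseteq> U" using \<delta> xy by blast
    ultimately show "\<exists>F. lift_upto y p F" using lift_upto_extend[OF p] xy by blast
  qed auto
qed

lemma lift_unique:
  assumes p: "pathin X p" and F: "lift_upto 1 p F" and F': "lift_upto 1 p F'" and t: "t \<in> {0..1}"
  shows "F t = F' t"
proof -
  obtain \<delta> where "\<delta> > 0"
    and \<delta>: "\<And>a b. 0 \<le> a \<Longrightarrow> a \<le> b \<Longrightarrow> b \<le> 1 \<Longrightarrow> b - a < \<delta> \<Longrightarrow> \<exists>U\<in>\<U>. p ` {a..b} \<subseteq> U"
    using path_Lebesgue_number[OF p] by blast
  show ?thesis
  proof (rule real_interval_step_induct[where P = "\<lambda>t. F t = F' t", OF \<open>\<delta> > 0\<close>])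
    show "F 0 = F' 0" using lift_uptoD(1)[OF F] lift_uptoD(1)[OF F'] by simp
    fix x y assume xy: "0 \<le> x" "x \<le> y" "y \<le> 1" "y - x < \<delta>" and "F x = F' x"
    obtain U where U: "U \<in> \<U>" "p ` {x..y} \<subseteq> U" using \<delta> xy by blast
    show "F y = F' y"
      using lift_uptoD(3)[OF F xy(1-3) U] lift_uptoD(3)[OF F' xy(1-3) U] \<open>F x = F' x\<close> by simp
  qed (use t in auto)
qed

definition extension :: "(real \<Rightarrow> 'a) \<Rightarrow> 'g" where
  "extension = (\<lambda>p\<in>paths_of X. (SOME F. lift_upto 1 p F) 1)"

lemma extension_eq:
  assumes "pathin X p" "lift_upto 1 p F"
  shows "extension p = F 1"
proof -
  have "lift_upto 1 p (SOME F. lift_upto 1 p F)"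
    using lift_exists[OF assms(1)] by (rule someI_ex)
  then show ?thesis
    using lift_unique[OF assms(1) _ assms(2), of _ 1] assms(1) by (simp add: extension_def paths_of_def)
qed

lemma extension_carrier:
  assumes "pathin X p"
  shows "extension p \<in> carrier G"
proof -
  obtain F where F: "lift_upto 1 p F" using lift_exists[OF assms] by blast
  have "F 1 \<in> carrier G" using lift_uptoD(2)[OF F] by simp
  then show ?thesis using extension_eq[OF assms F] by simp
qed

lemma lift_compose_linepath:
  assumes p: "pathin X p" and F: "lift_upto 1 p F" and ab: "0 \<le> a" "a \<le> b" "b \<le> 1"
  shows "lift_upto 1 (p \<circ> linepath a b) (\<lambda>t. inv\<^bsub>G\<^esub> F a \<otimes>\<^bsub>G\<^esub> F (linepath a b t))"
proof -
  have lp: "linepath a b t \<in> {a..b}" if "t \<in> {0..1}" for t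
    using linepath_in_path[OF that, of a b] ab by (simp add: closed_segment_eq_real_ivl)
  have Fa: "F a \<in> carrier G" using lift_uptoD(2)[OF F] ab by simp
  show ?thesis
    unfolding lift_upto_def
  proof (intro conjI ballI allI impI)
    show "inv\<^bsub>G\<^esub> F a \<otimes>\<^bsub>G\<^esub> F (linepath a b 0) = \<one>\<^bsub>G\<^esub>" using Fa by (simp add: linepath_0')
    show "inv\<^bsub>G\<^esub> F a \<otimes>\<^bsub>G\<^esub> F (linepath a b t) \<in> carrier G" if "t \<in> {0..1}" for t
      using Fa lp[OF that] ab lift_uptoD(2)[OF F] by auto
    fix x y U assume xy: "0 \<le> x" "x \<le> y" "y \<le> 1"
      and "U \<in> \<U>" "(p \<circ> linepath a b) ` {x..y} \<subseteq> U"
    moreover have "(p \<circ> linepath a b) ` {x..y} = p ` {linepath a b x..linepath a b y}"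
      unfolding image_comp[symmetric] using linepath_real_image[OF ab(2) xy(2)] by simp
    ultimately have U: "U \<in> \<U>" "p ` {linepath a b x..linepath a b y} \<subseteq> U"
      by simp_all
    have x'y': "a \<le> linepath a b x" "linepath a b x \<le> linepath a b y" "linepath a b y \<le> b"
      using lp[of x] lp[of y] xy ab mult_left_mono[of x y "b - a"] by (auto simp: linepath_real)
    have "F (linepath a b y) = F (linepath a b x) \<otimes>\<^bsub>G\<^esub> w (p \<circ> linepath (linepath a b x) (linepath a b y))"
      using x'y' ab by (intro lift_uptoD(3)[OF F _ _ _ U]) auto
    moreover have "w (p \<circ> linepath (linepath a b x) (linepath a b y)) \<in> carrier G"
      using x'y' ab U by (intro w_carrier short_subpath[OF p _ _ _ U(1)]) auto
    moreover have "F (linepath a b x) \<in> carrier G"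
      using x'y' ab lift_uptoD(2)[OF F] by auto
    ultimately show "inv\<^bsub>G\<^esub> F a \<otimes>\<^bsub>G\<^esub> F (linepath a b y)
        = inv\<^bsub>G\<^esub> F a \<otimes>\<^bsub>G\<^esub> F (linepath a b x) \<otimes>\<^bsub>G\<^esub> w ((p \<circ> linepath a b) \<circ> linepath x y)"
      using Fa by (simp add: comp_assoc linepath_compose_linepath G.m_assoc)
  qed
qed

lemma extension_compose_linepath:
  assumes "pathin X p" "lift_upto 1 p F" "0 \<le> a" "a \<le> b" "b \<le> 1"
  shows "extension (p \<circ> linepath a b) = inv\<^bsub>G\<^esub> F a \<otimes>\<^bsub>G\<^esub> F b"
  using extension_eq[OF pathin_compose_linepath lift_compose_linepath[OF assms]] assms
  by (simp add: linepath_1')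

lemma extension_split:
  assumes p: "pathin X p" and c: "0 \<le> c" "c \<le> 1"
  shows "extension p = extension (p \<circ> linepath 0 c) \<otimes>\<^bsub>G\<^esub> extension (p \<circ> linepath c 1)"
proof -
  obtain F where F: "lift_upto 1 p F" using lift_exists[OF p] by blast
  have "extension (p \<circ> linepath 0 c) \<otimes>\<^bsub>G\<^esub> extension (p \<circ> linepath c 1)
      = (inv\<^bsub>G\<^esub> F 0 \<otimes>\<^bsub>G\<^esub> F c) \<otimes>\<^bsub>G\<^esub> (inv\<^bsub>G\<^esub> F c \<otimes>\<^bsub>G\<^esub> F 1)"
    using extension_compose_linepath[OF p F] c by simp
  also have "\<dots> = F 1"
    using lift_uptoD[OF F] c by (simp add: G.m_assoc[symmetric])
  finally show ?thesis using extension_eq[OF p F] by simp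
qed

lemma extension_cong:
  assumes p: "pathin X p" and pq: "\<And>t. t \<in> {0..1} \<Longrightarrow> p t = q t"
  shows "extension q = extension p"
proof -
  have q: "pathin X q"
    using p pq unfolding pathin_def by (rule continuous_map_eq) simp
  obtain F where F: "lift_upto 1 p F" using lift_exists[OF p] by blast
  have "lift_upto 1 q F"
    unfolding lift_upto_def
  proof (intro conjI ballI allI impI)
    fix a b U assume ab: "0 \<le> a" "a \<le> b" "b \<le> 1" and "U \<in> \<U>" "q ` {a..b} \<subseteq> U"
    moreover have "q ` {a..b} = p ` {a..b}" using ab pq by (auto intro!: image_cong)
    ultimately have U: "U \<in> \<U>" "p ` {a..b} \<subseteq> U" by simp_all
    have "w (q \<circ> linepath a b) = w (p \<circ> linepath a b)"
    proof (rule w_cong[OF short_subpath[OF q ab U(1)] short_subpath[OF p ab U]])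
      show "q ` {a..b} \<subseteq> U" using U(2) \<open>q ` {a..b} = p ` {a..b}\<close> by simp
      fix t :: real assume "t \<in> {0..1}"
      then have "linepath a b t \<in> {0..1}"
        using linepath_in_path[of t a b] ab by (auto simp: closed_segment_eq_real_ivl)
      then show "(q \<circ> linepath a b) t = (p \<circ> linepath a b) t" using pq by simp
    qed
    then show "F b = F a \<otimes>\<^bsub>G\<^esub> w (q \<circ> linepath a b)"
      using lift_uptoD(3)[OF F ab U] by simp
  qed (use lift_uptoD[OF F] in auto)
  then show ?thesis using extension_eq[OF q] extension_eq[OF p F] by simp
qed

lemma extension_pjoin:
  assumes p: "pathin X p" and q: "pathin X q" and pq: "p 1 = q 0"
  shows "extension (pjoin p q) = extension p \<otimes>\<^bsub>G\<^esub> extension q"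
proof -
  have "extension (pjoin p q \<circ> linepath 0 (1/2)) = extension p"
    by (rule extension_cong[OF p]) (auto simp: pjoin_def linepath_real)
  moreover have "extension (pjoin p q \<circ> linepath (1/2) 1) = extension q"
    by (rule extension_cong[OF q]) (use pq in \<open>auto simp: pjoin_def linepath_real\<close>)
  ultimately show ?thesis
    using extension_split[OF pathin_pjoin[OF p q pq], of "1/2"] by simp
qed

lemma extension_short:
  assumes "p \<in> short_paths X \<U>"
  shows "extension p = w p"
proof -
  obtain U where p: "pathin X p" and U: "U \<in> \<U>" "p ` {0..1} \<subseteq> U"
    using assms by (auto simp: short_paths_def)
  have in_U: "p ` {a..b} \<subseteq> U" if "0 \<le> a" "b \<le> 1" for a b
    using that by (intro subset_trans[OF image_mono U(2)]) auto
  have "lift_upto 1 p (\<lambda>t. w (p \<circ> linepath 0 t))"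
    unfolding lift_upto_def
  proof (intro conjI ballI allI impI)
    show "w (p \<circ> linepath 0 0) = \<one>\<^bsub>G\<^esub>"
      using w_const[OF path_start_in_topspace[OF p]] by (simp add: linepath_refl o_def)
    show "w (p \<circ> linepath 0 t) \<in> carrier G" if "t \<in> {0..1}" for t
      using that in_U by (intro w_carrier short_subpath[OF p _ _ _ U(1)]) auto
    fix a b :: real and V assume "0 \<le> a" "a \<le> b" "b \<le> 1" "V \<in> \<U>" "p ` {a..b} \<subseteq> V"
    then show "w (p \<circ> linepath 0 b) = w (p \<circ> linepath 0 a) \<otimes>\<^bsub>G\<^esub> w (p \<circ> linepath a b)"
      using in_U by (intro w_subpath_split[OF p _ _ _ _ U(1)]) auto
  qed
  then show ?thesis using extension_eq[OF p] by (simp add: linepath_real o_def)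
qed

lemma extension_trivial_on_Y:
  assumes p: "pathin X p" and Y: "p ` {0..1} \<subseteq> Y"
  shows "extension p = \<one>\<^bsub>G\<^esub>"
proof -
  have "lift_upto 1 p (\<lambda>t. \<one>\<^bsub>G\<^esub>)"
    unfolding lift_upto_def
  proof (intro conjI ballI allI impI)
    fix a b U assume ab: "0 \<le> a" "a \<le> b" "b \<le> 1" and U: "U \<in> \<U>" "p ` {a..b} \<subseteq> U"
    have "p \<circ> linepath a b \<in> short_paths X \<U>" by (rule short_subpath[OF p ab U])
    moreover have "(p \<circ> linepath a b) ` {0..1} \<subseteq> Y"
      using Y ab image_compose_linepath[OF ab(2), of p] by auto
    ultimately show "\<one>\<^bsub>G\<^esub> = \<one>\<^bsub>G\<^esub> \<otimes>\<^bsub>G\<^esub> w (p \<circ> linepath a b)" using w_trivial_on_Y by simp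
  qed auto
  then show ?thesis using extension_eq[OF p] by simp
qed

context
  fixes h :: "real \<times> real \<Rightarrow> 'a" and s s' e :: real
  assumes strip: "continuous_map (top_of_set ({s..s'} \<times> {0..1})) X h" and "s \<le> s'"
    and strip_ends: "\<And>r. r \<in> {s..s'} \<Longrightarrow> h (r, 0) = h (s, 0) \<and> h (r, 1) = h (s, 1)"
    and "e > 0"
    and strip_thin: "\<And>a b. 0 \<le> a \<Longrightarrow> a \<le> b \<Longrightarrow> b \<le> 1 \<Longrightarrow> b - a < e \<Longrightarrow>
      \<exists>U\<in>\<U>. h ` ({s..s'} \<times> {a..b}) \<subseteq> U"
begin

lemma strip_chart: "0 \<le> a \<Longrightarrow> b \<le> 1 \<Longrightarrow> continuous_map (top_of_set ({s..s'} \<times> {a..b})) X h"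
  using strip by (rule continuous_map_from_subtopology_mono) auto

lemma strip_horizontal_short:
  assumes "t \<in> {0..1}"
  shows "h \<circ> linepath (s, t) (s', t) \<in> short_paths X \<U>"
proof -
  obtain U where "U \<in> \<U>" "h ` ({s..s'} \<times> {t..t}) \<subseteq> U"
    using strip_thin[of t t] assms \<open>e > 0\<close> by auto
  moreover have "path_image (linepath (s, t) (s', t)) \<subseteq> {s..s'} \<times> {t..t}"
    using \<open>s \<le> s'\<close> closed_segment_subset[of "(s, t)" "{s..s'} \<times> {t..t}" "(s', t)"]
    by (simp add: convex_Times)
  ultimately show ?thesis using strip_chart[of t t] assms by (intro short_path_in_chart) auto
qed

lemma strip_horizontal_ends:
  assumes "t = 0 \<or> t = 1"
  shows "w (h \<circ> linepath (s, t) (s', t)) = \<one>\<^bsub>G\<^esub>"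
proof (rule w_eq_one_if_constant[OF strip_horizontal_short])
  fix r :: real assume "r \<in> {0..1}"
  then have "linepath s s' r \<in> {s..s'}"
    using linepath_in_path[of r s s'] \<open>s \<le> s'\<close> by (simp add: closed_segment_eq_real_ivl)
  then show "(h \<circ> linepath (s, t) (s', t)) r = h (s, t)"
    using strip_ends assms by (auto simp: linepath_Pair linepath_refl)
qed (use assms in auto)

lemma lift_across_strip:
  assumes F: "lift_upto 1 (\<lambda>t. h (s, t)) F" and F': "lift_upto 1 (\<lambda>t. h (s', t)) F'"
    and "t \<in> {0..1}"
  shows "F' t = F t \<otimes>\<^bsub>G\<^esub> w (h \<circ> linepath (s, t) (s', t))"
proof (rule real_interval_step_induct[where P = "\<lambda>t. F' t = F t \<otimes>\<^bsub>G\<^esub> w (h \<circ> linepath (s, t) (s', t))",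
      OF \<open>e > 0\<close>])
  show "F' 0 = F 0 \<otimes>\<^bsub>G\<^esub> w (h \<circ> linepath (s, 0) (s', 0))"
    using strip_horizontal_ends[of 0] lift_uptoD(1)[OF F] lift_uptoD(1)[OF F'] by simp
  fix x y assume xy: "0 \<le> x" "x \<le> y" "y \<le> 1" "y - x < e"
    and IH: "F' x = F x \<otimes>\<^bsub>G\<^esub> w (h \<circ> linepath (s, x) (s', x))"
  obtain U where U: "U \<in> \<U>" "h ` ({s..s'} \<times> {x..y}) \<subseteq> U" using strip_thin xy by blast
  have in_U: "(\<lambda>t. h (r, t)) ` {x..y} \<subseteq> U" if "r \<in> {s..s'}" for r using U(2) that by auto
  have edge_carrier: "w ((\<lambda>t. h (r, t)) \<circ> linepath x y) \<in> carrier G" if "r \<in> {s..s'}" for r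
    using xy in_U[OF that] strip that
    by (intro w_carrier short_subpath[OF pathin_slice _ _ _ U(1)]) auto
  have carrier: "F x \<in> carrier G" "w (h \<circ> linepath (s, x) (s', x)) \<in> carrier G"
    "w (h \<circ> linepath (s, y) (s', y)) \<in> carrier G"
    using lift_uptoD(2)[OF F] strip_horizontal_short xy by (auto intro: w_carrier)
  have s_in: "s \<in> {s..s'}" "s' \<in> {s..s'}" using \<open>s \<le> s'\<close> by auto
  have "F y \<otimes>\<^bsub>G\<^esub> w (h \<circ> linepath (s, y) (s', y))
      = F x \<otimes>\<^bsub>G\<^esub> (w ((\<lambda>t. h (s, t)) \<circ> linepath x y) \<otimes>\<^bsub>G\<^esub> w (h \<circ> linepath (s, y) (s', y)))"
    using lift_uptoD(3)[OF F xy(1-3) U(1) in_U[OF s_in(1)]] carrier edge_carrier[OF s_in(1)]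
    by (simp add: G.m_assoc)
  also have "\<dots> = (F x \<otimes>\<^bsub>G\<^esub> w (h \<circ> linepath (s, x) (s', x))) \<otimes>\<^bsub>G\<^esub> w ((\<lambda>t. h (s', t)) \<circ> linepath x y)"
    using w_rectangle[OF strip_chart \<open>s \<le> s'\<close> xy(2) U] xy carrier edge_carrier[OF s_in(2)]
    by (simp add: G.m_assoc)
  also have "\<dots> = F' y"
    using lift_uptoD(3)[OF F' xy(1-3) U(1) in_U[OF s_in(2)]] IH by simp
  finally show "F' y = F y \<otimes>\<^bsub>G\<^esub> w (h \<circ> linepath (s, y) (s', y))" by simp
qed (use assms in auto)

lemma extension_strip: "extension (\<lambda>t. h (s', t)) = extension (\<lambda>t. h (s, t))"
proof -
  have path: "pathin X (\<lambda>t. h (r, t))" if "r \<in> {s..s'}" for r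
    using pathin_slice[OF strip that] .
  obtain F where F: "lift_upto 1 (\<lambda>t. h (s, t)) F" using lift_exists path \<open>s \<le> s'\<close> by auto
  obtain F' where F': "lift_upto 1 (\<lambda>t. h (s', t)) F'" using lift_exists path \<open>s \<le> s'\<close> by auto
  have "F' 1 = F 1"
    using lift_across_strip[OF F F', of 1] strip_horizontal_ends[of 1] lift_uptoD(2)[OF F, of 1]
    by simp
  then show ?thesis using extension_eq[OF path F'] extension_eq[OF path F] \<open>s \<le> s'\<close> by simp
qed

end

lemma extension_homotopic:
  assumes pq: "phomotopic X p q"
  shows "extension p = extension q"
proof -
  obtain h :: "real \<times> real \<Rightarrow> 'a" where h: "continuous_map (top_of_set ({0..1} \<times> {0..1})) X h"
    and h01: "\<And>t. h (0, t) = p t" "\<And>t. h (1, t) = q t"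
    and ends: "\<And>r. r \<in> {0..1} \<Longrightarrow> h (r, 0) = p 0 \<and> h (r, 1) = p 1"
    using pq unfolding phomotopic_def homotopic_with_def prod_topology_subtopology_eu by blast
  show ?thesis
  proof (rule Lebesgue_number_open_cover[OF _ _ h])
    fix \<delta> :: real assume "\<delta> > 0"
      and \<delta>: "\<And>T. T \<subseteq> {0..1} \<times> {0..1} \<Longrightarrow> diameter T < \<delta> \<Longrightarrow> \<exists>U\<in>\<U>. h ` T \<subseteq> U"
    have "extension (\<lambda>t. h (s, t)) = extension (\<lambda>t. h (0, t))" if "s \<in> {0..1}" for s
    proof (rule real_interval_step_induct[where P = "\<lambda>s. extension (\<lambda>t. h (s, t)) = extension (\<lambda>t. h (0, t))"])
      show "\<delta>/2 > 0" using \<open>\<delta> > 0\<close> by simp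
      fix x y assume xy: "0 \<le> x" "x \<le> y" "y \<le> 1" "y - x < \<delta>/2"
      have "extension (\<lambda>t. h (y, t)) = extension (\<lambda>t. h (x, t))"
      proof (rule extension_strip[where s = x and s' = y and e = "\<delta>/2"])
        show "continuous_map (top_of_set ({x..y} \<times> {0..1})) X h"
          using h by (rule continuous_map_from_subtopology_mono) (use xy in auto)
        fix a b assume "0 \<le> a" "a \<le> b" "b \<le> 1" "b - a < \<delta>/2"
        then show "\<exists>U\<in>\<U>. h ` ({x..y} \<times> {a..b}) \<subseteq> U"
          using diameter_real_rectangle_le[of x y a b] xy by (intro \<delta>) auto
      qed (use xy ends \<open>\<delta> > 0\<close> in auto)
      then show "extension (\<lambda>t. h (x, t)) = extension (\<lambda>t. h (0, t)) \<Longrightarrow>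
          extension (\<lambda>t. h (y, t)) = extension (\<lambda>t. h (0, t))" by simp
    qed (use that in auto)
    from this[of 1] show ?thesis by (simp add: h01)
  qed (use openin_cover Union_cover in \<open>auto intro: compact_Times\<close>)
qed

lemma extension_cocycle: "extension \<in> cocycles1 X Y G"
  unfolding cocycles1_def
proof (intro CollectI conjI ballI impI)
  show "extension \<in> extensional (paths_of X)" by (simp add: extension_def)
  fix p assume p: "p \<in> paths_of X"
  then show "extension p \<in> carrier G" "p ` {0..1} \<subseteq> Y \<Longrightarrow> extension p = \<one>\<^bsub>G\<^esub>"
    by (auto simp: paths_of_def extension_carrier extension_trivial_on_Y)
  fix q assume q: "q \<in> paths_of X"
  show "phomotopic X p q \<Longrightarrow> extension p = extension q" by (rule extension_homotopic)
  show "p 1 = q 0 \<Longrightarrow> extension (pjoin p q) = extension p \<otimes>\<^bsub>G\<^esub> extension q"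
    using p q by (auto simp: paths_of_def extension_pjoin)
qed

lemma restrict_extension: "restrict extension (short_paths X \<U>) = w"
  using w_extensional by (auto simp: fun_eq_iff extension_short extensional_def)

end

lemma short_paths_subset_paths: "short_paths X \<U> \<subseteq> paths_of X"
  by (auto simp: short_paths_def paths_of_def)

lemma short_homotopic_imp_phomotopic: "short_homotopic X \<U> p q \<Longrightarrow> phomotopic X p q"
  unfolding short_homotopic_def phomotopic_def homotopic_with_def continuous_map_in_subtopology
  by blast

lemma restrict_short_cocycle:
  assumes "v \<in> cocycles1 X Y G"
  shows "restrict_short X \<U> v \<in> short_cocycles1 X \<U> Y G"
  using assms short_paths_subset_paths[of X \<U>] short_homotopic_imp_phomotopic[of X \<U>]
  unfolding restrict_short_def cocycles1_def short_cocycles1_def by (auto simp: subset_iff)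

lemma short_cocycle_trivial_cover:
  assumes "group G" "v \<in> cocycles1 X Y G"
  shows "short_cocycle X {topspace X} Y G v"
proof -
  have "short_paths X {topspace X} = paths_of X"
    by (auto simp: short_paths_def paths_of_def image_subset_iff dest: path_image_subset_topspace)
  moreover have "short_homotopic X {topspace X} = phomotopic X"
    by (simp add: fun_eq_iff short_homotopic_def phomotopic_def)
  ultimately show ?thesis
    using assms unfolding short_cocycle_def cocycles1_def short_cocycles1_def by auto
qed

lemma (in short_cocycle) cocycle_eq_extension:
  assumes v: "v \<in> cocycles1 X Y G" and vw: "restrict v (short_paths X \<U>) = w"
  shows "v = extension"
proof (rule extensionalityI[of _ "paths_of X"])
  show "v \<in> extensional (paths_of X)" using v by (simp add: cocycles1_def)
  show "extension \<in> extensional (paths_of X)" by (simp add: extension_def)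
  \<comment> \<open>\<open>v\<close> is a short cocycle for the trivial cover, so it is additive on subdivisions\<close>
  interpret V: short_cocycle X "{topspace X}" Y G v
    by (rule short_cocycle_trivial_cover[OF group_G v])
  fix p assume "p \<in> paths_of X"
  then have p: "pathin X p" by (simp add: paths_of_def)
  have in_top: "p ` {a..b} \<subseteq> topspace X" if "0 \<le> a" "b \<le> 1" for a b
    using path_image_subset_topspace[OF p] that by auto
  have "lift_upto 1 p (\<lambda>t. v (p \<circ> linepath 0 t))"
    unfolding lift_upto_def
  proof (intro conjI ballI allI impI)
    show "v (p \<circ> linepath 0 0) = \<one>\<^bsub>G\<^esub>"
      using V.w_const[OF path_start_in_topspace[OF p]] by (simp add: linepath_refl o_def)
    show "v (p \<circ> linepath 0 t) \<in> carrier G" if "t \<in> {0..1}" for t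
      using that in_top by (intro V.w_carrier V.short_subpath[OF p _ _ _ singletonI]) auto
    fix a b :: real and U assume ab: "0 \<le> a" "a \<le> b" "b \<le> 1" and U: "U \<in> \<U>" "p ` {a..b} \<subseteq> U"
    have "v (p \<circ> linepath a b) = w (p \<circ> linepath a b)"
      using vw short_subpath[OF p ab U] by auto
    moreover have "v (p \<circ> linepath 0 b) = v (p \<circ> linepath 0 a) \<otimes>\<^bsub>G\<^esub> v (p \<circ> linepath a b)"
      using ab in_top by (intro V.w_subpath_split[OF p _ _ _ _ singletonI]) auto
    ultimately show "v (p \<circ> linepath 0 b) = v (p \<circ> linepath 0 a) \<otimes>\<^bsub>G\<^esub> w (p \<circ> linepath a b)"
      by simp
  qed
  then show "v p = extension p" using extension_eq[OF p] by (simp add: linepath_real o_def)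
qed

lemma bij_betw_restrict_short_cocycles:
  assumes "group G" "\<And>U. U \<in> \<U> \<Longrightarrow> openin X U" "\<Union>\<U> = topspace X"
  shows "bij_betw (restrict_short X \<U>) (cocycles1 X Y G) (short_cocycles1 X \<U> Y G)"
proof (rule bij_betw_imageI)
  have short_cocycle: "short_cocycle X \<U> Y G w" if "w \<in> short_cocycles1 X \<U> Y G" for w
    using assms that by (simp add: short_cocycle_def)
  show "inj_on (restrict_short X \<U>) (cocycles1 X Y G)"
  proof (rule inj_onI)
    fix u v assume u: "u \<in> cocycles1 X Y G" and v: "v \<in> cocycles1 X Y G"
      and uv: "restrict_short X \<U> u = restrict_short X \<U> v"
    interpret short_cocycle X \<U> Y G "restrict_short X \<U> u"
      by (rule short_cocycle[OF restrict_short_cocycle[OF u]])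
    show "u = v"
      using cocycle_eq_extension[OF u] cocycle_eq_extension[OF v] uv by (simp add: restrict_short_def)
  qed
  show "restrict_short X \<U> ` cocycles1 X Y G = short_cocycles1 X \<U> Y G"
  proof (intro subset_antisym image_subsetI subsetI)
    show "restrict_short X \<U> u \<in> short_cocycles1 X \<U> Y G" if "u \<in> cocycles1 X Y G" for u
      using restrict_short_cocycle that .
    fix w assume "w \<in> short_cocycles1 X \<U> Y G"
    then interpret short_cocycle X \<U> Y G w by (rule short_cocycle)
    have "w = restrict_short X \<U> extension"
      using restrict_extension by (simp add: restrict_short_def)
    then show "w \<in> restrict_short X \<U> ` cocycles1 X Y G"
      by (rule image_eqI[OF _ extension_cocycle])
  qed
qed

lemma restrict_short_cochain_act:
  "restrict_short X \<U> (cochain_act G (paths_of X) c u)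
     = cochain_act G (short_paths X \<U>) c (restrict_short X \<U> u)"
  using short_paths_subset_paths[of X \<U>]
  by (auto simp: restrict_short_def cochain_act_def fun_eq_iff)

lemma cochain_act_cocycle:
  assumes "group G" and c: "c \<in> cochains0 X Y G" and u: "u \<in> cocycles1 X Y G"
  shows "cochain_act G (paths_of X) c u \<in> cocycles1 X Y G"
proof -
  interpret G: group G by (rule assms(1))
  let ?v = "cochain_act G (paths_of X) c u"
  have car: "c (p 0) \<in> carrier G" "c (p 1) \<in> carrier G" "u p \<in> carrier G" if "p \<in> paths_of X" for p
  proof -
    have "p 0 \<in> topspace X" "p 1 \<in> topspace X"
      using that path_start_in_topspace path_finish_in_topspace by (auto simp: paths_of_def)
    then show "c (p 0) \<in> carrier G" "c (p 1) \<in> carrier G" "u p \<in> carrier G"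
      using that c u by (auto simp: cochains0_def cocycles1_def)
  qed
  show ?thesis
    unfolding cocycles1_def
  proof (intro CollectI conjI ballI impI)
    show "?v \<in> extensional (paths_of X)" by (simp add: cochain_act_def)
    fix p assume p: "p \<in> paths_of X"
    show "?v p \<in> carrier G" using car[OF p] p by (simp add: cochain_act_def)
    show "?v p = \<one>\<^bsub>G\<^esub>" if "p ` {0..1} \<subseteq> Y"
      using that p c u by (auto simp: cochain_act_def cochains0_def cocycles1_def image_subset_iff)
    fix q assume q: "q \<in> paths_of X"
    show "?v p = ?v q" if "phomotopic X p q"
    proof -
      have "q 0 = p 0" "q 1 = p 1"
        using homotopic_with_imp_property[OF that[unfolded phomotopic_def]] by auto
      moreover have "u p = u q" using u p q that by (auto simp: cocycles1_def)
      ultimately show ?thesis using p q by (simp add: cochain_act_def)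
    qed
    show "?v (pjoin p q) = ?v p \<otimes>\<^bsub>G\<^esub> ?v q" if pq: "p 1 = q 0"
    proof -
      have "pjoin p q \<in> paths_of X" using pathin_pjoin p q pq by (auto simp: paths_of_def)
      moreover have "u (pjoin p q) = u p \<otimes>\<^bsub>G\<^esub> u q" using u p q pq by (auto simp: cocycles1_def)
      moreover have "inv\<^bsub>G\<^esub> x \<otimes>\<^bsub>G\<^esub> (x \<otimes>\<^bsub>G\<^esub> y) = y" if "x \<in> carrier G" "y \<in> carrier G" for x y
        using that by (simp add: G.m_assoc[symmetric])
      ultimately show ?thesis using car[OF p] car[OF q] p q pq by (simp add: cochain_act_def G.m_assoc)
    qed
  qed
qed

lemma bij_betw_orbits:
  assumes bij: "bij_betw r Z Z'"
    and closed: "\<And>c u. c \<in> C \<Longrightarrow> u \<in> Z \<Longrightarrow> act c u \<in> Z"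
    and equivariant: "\<And>c u. c \<in> C \<Longrightarrow> u \<in> Z \<Longrightarrow> r (act c u) = act' c (r u)"
  shows "bij_betw (\<lambda>K. r ` K) {{act c u | c. c \<in> C} | u. u \<in> Z} {{act' c u | c. c \<in> C} | u. u \<in> Z'}"
proof (rule bij_betw_imageI)
  show "inj_on (\<lambda>K. r ` K) {{act c u | c. c \<in> C} | u. u \<in> Z}"
  proof (rule inj_onI)
    fix K K' assume "K \<in> {{act c u | c. c \<in> C} | u. u \<in> Z}" "K' \<in> {{act c u | c. c \<in> C} | u. u \<in> Z}"
    then have "K \<subseteq> Z" "K' \<subseteq> Z" using closed by blast+
    then show "r ` K = r ` K' \<Longrightarrow> K = K'"
      using inj_on_image_eq_iff[OF bij_betw_imp_inj_on[OF bij]] by blast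
  qed
  have "r ` {act c u | c. c \<in> C} = {act' c (r u) | c. c \<in> C}" if "u \<in> Z" for u
    using equivariant that by force
  then have "(\<lambda>K. r ` K) ` {{act c u | c. c \<in> C} | u. u \<in> Z} = {{act' c u | c. c \<in> C} | u. u \<in> r ` Z}"
    by blast
  then show "(\<lambda>K. r ` K) ` {{act c u | c. c \<in> C} | u. u \<in> Z} = {{act' c u | c. c \<in> C} | u. u \<in> Z'}"
    using bij_betw_imp_surj_on[OF bij] by simp
qed

theorem theorem3p1:
  fixes X :: "'a topology" and Y :: "'a set" and G :: "('g, 'b) monoid_scheme"
    and \<U> :: "'a set set"
  assumes "path_connected_space X"
    and "Y \<subseteq> topspace X"
    and "group G"
    and "\<forall>U\<in>\<U>. openin X U"
    and "\<Union>\<U> = topspace X"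
  shows "bij_betw (restrict_short X \<U>) (cocycles1 X Y G) (short_cocycles1 X \<U> Y G)
       \<and> bij_betw (\<lambda>K. restrict_short X \<U> ` K) (H1 X Y G) (short_H1 X \<U> Y G)"
proof -
  have bij: "bij_betw (restrict_short X \<U>) (cocycles1 X Y G) (short_cocycles1 X \<U> Y G)"
    using bij_betw_restrict_short_cocycles assms(3-5) by blast
  moreover have "bij_betw (\<lambda>K. restrict_short X \<U> ` K) (H1 X Y G) (short_H1 X \<U> Y G)"
    unfolding H1_def short_H1_def
  proof (rule bij_betw_orbits[OF bij])
    fix c u assume "c \<in> cochains0 X Y G" "u \<in> cocycles1 X Y G"
    then show "cochain_act G (paths_of X) c u \<in> cocycles1 X Y G"
      by (rule cochain_act_cocycle[OF assms(3)])
  qed (rule restrict_short_cochain_act)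
  ultimately show ?thesis ..
qed

end
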